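(* Let $a\in\mathbb C^*$ and $L\in\mathbb Z_{>0}$. Then $\ker(s_{a,L})=\mathfrak I_{U_a(t)^L}$. Moreover $s_{a,L}$ is surjective if and only if $a\neq\pm1$.
   Context: Work over $\mathbb C$. $\mathfrak{sl}_2$ has basis $e,f,h$ with $[e,f]=h$, $[h,e]=2e$, $[h,f]=-2f$. $L(\mathfrak{sl}_2)=\mathbb C[t,t^{-1}]\otimes\mathfrak{sl}_2$ is the loop algebra with bracket $[p(t)x,q(t)y]=p(t)q(t)[x,y]$. The Onsager algebra is the Lie subalgebra $\mathfrak{OA}=\{p(t)e+p(t^{-1})f+q(t)h:\ p,q\in\mathbb C[t,t^{-1}],\ q(t^{-1})=-q(t)\}$ of $L(\mathfrak{sl}_2)$. For $a\in\mathbb C^*$, $U_a(t)=t^2-(a+a^{-1})t+1$ if $a^2\neq1$ and $U_a(t)=t-a$ if $a=\pm1$. For a reciprocal polynomial $P$ (nonconstant monic with $P(t)=\pm t^{\deg P}P(t^{-1})$), $\mathfrak I_{P(t)}=\{p(t)e+p(t^{-1})f+q(t)h\in\mathfrak{OA}:\ p(t),q(t)\in P(t)\mathbb C[t,t^{-1}]\}$. For $a\in\mathbb C^*$, $s_a:\mathfrak{OA}\to\mathfrak{sl}_2[[u]]=\mathbb C[[u]]\otimes\mathfrak{sl}_2$ is the Lie algebra homomorphism given by Taylor expansion at $t=a$ in the variable $u=t-a$: $p(t)x\mapsto\sum_{j\ge0}\frac{p^{(j)}(a)}{j!}u^jx$. $s_{a,L}$ is the composition of $s_a$ with the projection $\mathfrak{sl}_2[[u]]\to\mathfrak{sl}_2[[u]]/u^L\mathfrak{sl}_2[[u]]\cong(\mathbb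 C[u]/u^L\mathbb C[u])\otimes\mathfrak{sl}_2$. *)

theory Defs
  imports "HOL-Computational_Algebra.Computational_Algebra"
begin

text \<open>Laurent polynomials C[t,t^-1] are modelled as formal Laurent series
  with finitely many nonzero coefficients.\<close>

definition laurent_poly :: "complex fls \<Rightarrow> bool" where
  "laurent_poly p \<longleftrightarrow> finite {n. fls_nth p n \<noteq> 0}"

definition lp_eval :: "complex fls \<Rightarrow> complex \<Rightarrow> complex" where
  "lp_eval p z = (\<Sum>n\<in>{n. fls_nth p n \<noteq> 0}. fls_nth p n * z powi n)"

definition lp_inv :: "complex fls \<Rightarrow> complex fls" where
  "lp_inv p = (\<Sum>n\<in>{n. fls_nth p n \<noteq> 0}. fls_const (fls_nth p n) * fls_X_intpow (- n))"

definition poly_to_lp :: "complex poly \<Rightarrow> complex fls" where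
  "poly_to_lp P = fps_to_fls (fps_of_poly P)"

definition lp_multiples :: "complex poly \<Rightarrow> complex fls set" where
  "lp_multiples P = {p. \<exists>q. laurent_poly q \<and> p = poly_to_lp P * q}"

text \<open>Elements of the loop algebra L(sl2) are triples (p, r, q) standing for
  p(t) e + r(t) f + q(t) h.\<close>
type_synonym loop_elt = "complex fls \<times> complex fls \<times> complex fls"

definition onsager :: "loop_elt set" where
  "onsager = {(p, r, q). laurent_poly p \<and> laurent_poly q \<and> r = lp_inv p \<and> lp_inv q = - q}"

definition U_poly :: "complex \<Rightarrow> complex poly" where
  "U_poly a = (if a^2 \<noteq> 1 then [:1, -(a + inverse a), 1:] else [:-a, 1:])"

definition onsager_ideal :: "complex poly \<Rightarrow> loop_elt set" where
  "onsager_ideal P = {(p, r, q) \<in> onsager. p \<in> lp_multiples P \<and> q \<in> lp_multiples P}"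

definition taylor_coeff :: "complex \<Rightarrow> nat \<Rightarrow> complex fls \<Rightarrow> complex" where
  "taylor_coeff a j p = lp_eval ((fls_deriv ^^ j) p) a / fact j"

text \<open>(C[u]/u^L) (x) sl2 is modelled as triples of coefficient sequences
  vanishing from index L on; s_{a,L} truncates the Taylor expansion.\<close>
definition s_trunc :: "complex \<Rightarrow> nat \<Rightarrow> loop_elt \<Rightarrow> (nat \<Rightarrow> complex) \<times> (nat \<Rightarrow> complex) \<times> (nat \<Rightarrow> complex)" where
  "s_trunc a L x = (case x of (p, r, q) \<Rightarrow>
     ((\<lambda>j. if j < L then taylor_coeff a j p else 0),
      (\<lambda>j. if j < L then taylor_coeff a j r else 0),
      (\<lambda>j. if j < L then taylor_coeff a j q else 0)))"

definition trunc_target :: "nat \<Rightarrow> ((nat \<Rightarrow> complex) \<times> (nat \<Rightarrow> complex) \<times> (nat \<Rightarrow> complex)) set" where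
  "trunc_target L = {(c1, c2, c3). \<forall>j\<ge>L. c1 j = 0 \<and> c2 j = 0 \<and> c3 j = 0}"

end

theory Submission
  imports Defs "HOL-Computational_Algebra.Field_as_Ring"
begin

(* For a <> 0 the first L Taylor coefficients of a Laurent polynomial p at a vanish iff
   (t - a)^L divides p in C[t,t^-1]: by the factor theorem and the shift rule
   coefficient_{j+1}((t - a) q) = coefficient_j(q). The involution t -> t^-1 turns t - a into a
   unit multiple of t - a^-1. Hence, for p e + p(t^-1) f + q h in the Onsager algebra, the
   f-component (resp. the antisymmetry q(t^-1) = -q(t)) turns vanishing of the jet at a into
   divisibility of p (resp. q) by (t - a^-1)^L as well. As U_a = (t - a)(t - a^-1) with coprime
   factors if a <> +-1, and U_a = t - a if a = +-1, this gives the kernel.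
   If a <> a^-1, the Chinese remainder theorem for (t - a)^L and (t - a^-1)^L lets one prescribe
   the jets of p at a and at a^-1 independently, and q = h - h(t^-1) with h congruent to the
   wanted jet mod (t - a)^L and to 0 mod (t - a^-1)^L; so s_{a,L} is onto. If a = +-1 = a^-1,
   every antisymmetric q vanishes at a, so s_{a,L} is not onto. *)

notation fls_nth (infixl "$$" 75)

abbreviation fls_support :: "complex fls \<Rightarrow> int set" where
  "fls_support p \<equiv> {n. p $$ n \<noteq> 0}"

section \<open>The ring of Laurent polynomials\<close>

lemma fls_monomial_nth [simp]:
  "(fls_const c * fls_X_intpow n) $$ k = (if k = n then (c :: 'a :: semiring_1) else 0)"
  by (subst fls_mult_const_nth(1)) simp

lemma fls_monomial_mult:
  "(fls_const c * fls_X_intpow n) * (fls_const d * fls_X_intpow m)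
     = fls_const (c * d :: 'a :: comm_semiring_1) * fls_X_intpow (n + m)"
proof -
  have "fls_X_intpow n * fls_X_intpow m = (fls_X_intpow (n + m) :: 'a fls)"
    by (rule fls_X_intpow_times_fls_X_intpow)
  then show ?thesis by (metis fls_const_mult_const mult.assoc mult.left_commute)
qed

lemma fls_monomial_expansion:
  assumes "finite S" "fls_support p \<subseteq> S"
  shows "p = (\<Sum>n\<in>S. fls_const (p $$ n) * fls_X_intpow n)"
proof (rule fls_eqI)
  fix k
  have "(\<Sum>n\<in>S. fls_const (p $$ n) * fls_X_intpow n) $$ k = (\<Sum>n\<in>S. if k = n then p $$ n else 0)"
    by (simp only: fls_nth_sum fls_monomial_nth)
  also have "\<dots> = p $$ k" using assms by (auto simp: sum.delta)
  finally show "p $$ k = (\<Sum>n\<in>S. fls_const (p $$ n) * fls_X_intpow n) $$ k" by simp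
qed

lemma laurent_poly_add: "laurent_poly p \<Longrightarrow> laurent_poly q \<Longrightarrow> laurent_poly (p + q)"
  unfolding laurent_poly_def
  by (rule finite_subset[of _ "fls_support p \<union> fls_support q"]) auto

lemma laurent_poly_uminus: "laurent_poly p \<Longrightarrow> laurent_poly (- p)"
  unfolding laurent_poly_def by simp

lemma laurent_poly_diff: "laurent_poly p \<Longrightarrow> laurent_poly q \<Longrightarrow> laurent_poly (p - q)"
  using laurent_poly_add[of p "- q"] laurent_poly_uminus[of q] by simp

lemma laurent_poly_zero: "laurent_poly 0"
  unfolding laurent_poly_def by simp

lemma laurent_poly_monomial: "laurent_poly (fls_const c * fls_X_intpow n)"
  unfolding laurent_poly_def by (rule finite_subset[of _ "{n}"]) auto

lemma laurent_poly_sum: "(\<And>i. i \<in> A \<Longrightarrow> laurent_poly (f i)) \<Longrightarrow> laurent_poly (\<Sum>i\<in>A. f i)"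
  by (induction A rule: infinite_finite_induct) (auto simp: laurent_poly_zero laurent_poly_add)

lemma fls_mult_monomial_expansion:
  assumes "laurent_poly p" "laurent_poly q"
  shows "p * q = (\<Sum>n\<in>fls_support p. \<Sum>m\<in>fls_support q.
                    fls_const (p $$ n * q $$ m) * fls_X_intpow (n + m))"
proof -
  have "p * q = (\<Sum>n\<in>fls_support p. fls_const (p $$ n) * fls_X_intpow n)
              * (\<Sum>m\<in>fls_support q. fls_const (q $$ m) * fls_X_intpow m)"
    using assms fls_monomial_expansion[of "fls_support p" p] fls_monomial_expansion[of "fls_support q" q]
    unfolding laurent_poly_def by simp
  then show ?thesis by (simp add: sum_product fls_monomial_mult)
qed

lemma laurent_poly_mult: "laurent_poly p \<Longrightarrow> laurent_poly q \<Longrightarrow> laurent_poly (p * q)"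
  by (subst fls_mult_monomial_expansion) (assumption+, intro laurent_poly_sum laurent_poly_monomial)

lemma laurent_poly_const: "laurent_poly (fls_const c)"
  using laurent_poly_monomial[of c 0] by simp

lemma laurent_poly_one: "laurent_poly 1"
  using laurent_poly_const[of 1] by simp

lemma laurent_poly_of_nat: "laurent_poly (of_nat n)"
  by (simp add: fls_of_nat laurent_poly_const)

lemma laurent_poly_fls_X: "laurent_poly fls_X"
  unfolding laurent_poly_def by (rule finite_subset[of _ "{1}"]) auto

lemma laurent_poly_fls_X_intpow: "laurent_poly (fls_X_intpow n)"
  using laurent_poly_monomial[of 1 n] by simp

lemma laurent_poly_power: "laurent_poly p \<Longrightarrow> laurent_poly (p ^ k)"
  by (induction k) (auto intro: laurent_poly_mult laurent_poly_one)

lemma laurent_poly_fls_deriv: "laurent_poly p \<Longrightarrow> laurent_poly (fls_deriv p)"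
  unfolding laurent_poly_def
  by (rule finite_subset[of _ "(\<lambda>n. n - 1) ` fls_support p"])
     (auto simp: image_iff intro!: exI[of _ "_ + 1"])

lemma laurent_poly_funpow_fls_deriv: "laurent_poly p \<Longrightarrow> laurent_poly ((fls_deriv ^^ j) p)"
  by (induction j) (auto intro: laurent_poly_fls_deriv)

lemma laurent_poly_poly_to_lp: "laurent_poly (poly_to_lp P)"
  unfolding laurent_poly_def poly_to_lp_def
proof (rule finite_subset[of _ "int ` {..degree P}"])
  show "fls_support (fps_to_fls (fps_of_poly P)) \<subseteq> int ` {..degree P}"
  proof
    fix n assume "n \<in> fls_support (fps_to_fls (fps_of_poly P))"
    then have "n \<ge> 0" "coeff P (nat n) \<noteq> 0" by (auto split: if_splits)
    then show "n \<in> int ` {..degree P}"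
      using le_degree by (auto intro!: image_eqI[of _ _ "nat n"])
  qed
qed simp

lemma poly_to_lp_add: "poly_to_lp (P + Q) = poly_to_lp P + poly_to_lp Q"
  unfolding poly_to_lp_def by (simp add: fps_of_poly_add)

lemma poly_to_lp_mult: "poly_to_lp (P * Q) = poly_to_lp P * poly_to_lp Q"
  unfolding poly_to_lp_def by (simp add: fps_of_poly_mult fls_times_fps_to_fls)

lemma poly_to_lp_one: "poly_to_lp 1 = 1"
  unfolding poly_to_lp_def by simp

lemma poly_to_lp_power: "poly_to_lp (P ^ n) = poly_to_lp P ^ n"
  by (induction n) (simp_all add: poly_to_lp_one poly_to_lp_mult)

section \<open>Evaluation and the involution \<open>t \<mapsto> t\<^sup>-\<^sup>1\<close>\<close>

lemma lp_eval_eq_sum: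
  assumes "finite S" "fls_support p \<subseteq> S"
  shows "lp_eval p z = (\<Sum>n\<in>S. p $$ n * z powi n)"
  unfolding lp_eval_def using assms by (intro sum.mono_neutral_left) auto

lemma lp_eval_add:
  assumes "laurent_poly p" "laurent_poly q"
  shows "lp_eval (p + q) z = lp_eval p z + lp_eval q z"
proof -
  let ?S = "fls_support p \<union> fls_support q"
  have S: "finite ?S" using assms unfolding laurent_poly_def by simp
  have "lp_eval (p + q) z = (\<Sum>n\<in>?S. (p + q) $$ n * z powi n)"
    by (rule lp_eval_eq_sum[OF S]) auto
  moreover have "lp_eval p z = (\<Sum>n\<in>?S. p $$ n * z powi n)"
    by (rule lp_eval_eq_sum[OF S]) auto
  moreover have "lp_eval q z = (\<Sum>n\<in>?S. q $$ n * z powi n)"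
    by (rule lp_eval_eq_sum[OF S]) auto
  ultimately show ?thesis by (simp add: sum.distrib distrib_right)
qed

lemma lp_eval_uminus: "lp_eval (- p) z = - lp_eval p z"
  unfolding lp_eval_def by (simp add: sum_negf)

lemma lp_eval_diff:
  "laurent_poly p \<Longrightarrow> laurent_poly q \<Longrightarrow> lp_eval (p - q) z = lp_eval p z - lp_eval q z"
  using lp_eval_add[of p "- q"] by (simp add: laurent_poly_uminus lp_eval_uminus)

lemma lp_eval_zero: "lp_eval 0 z = 0"
  unfolding lp_eval_def by simp

lemma lp_eval_sum:
  "(\<And>i. i \<in> A \<Longrightarrow> laurent_poly (f i)) \<Longrightarrow> lp_eval (\<Sum>i\<in>A. f i) z = (\<Sum>i\<in>A. lp_eval (f i) z)"
  by (induction A rule: infinite_finite_induct) (auto simp: lp_eval_zero lp_eval_add laurent_poly_sum)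

lemma lp_eval_monomial: "lp_eval (fls_const c * fls_X_intpow n) z = c * z powi n"
  by (subst lp_eval_eq_sum[of "{n}"]) auto

lemma lp_eval_mult:
  assumes "laurent_poly p" "laurent_poly q" "z \<noteq> 0"
  shows "lp_eval (p * q) z = lp_eval p z * lp_eval q z"
proof -
  have "lp_eval (p * q) z
      = (\<Sum>n\<in>fls_support p. \<Sum>m\<in>fls_support q. (p $$ n * z powi n) * (q $$ m * z powi m))"
    by (simp only: fls_mult_monomial_expansion[OF assms(1,2)] lp_eval_sum laurent_poly_sum
                   laurent_poly_monomial lp_eval_monomial)
       (simp add: power_int_add assms(3) algebra_simps)
  also have "\<dots> = lp_eval p z * lp_eval q z"
    unfolding lp_eval_def by (simp add: sum_product)
  finally show ?thesis .
qed

lemma lp_eval_const: "lp_eval (fls_const c) z = c"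
  using lp_eval_monomial[of c 0 z] by simp

lemma lp_eval_of_nat: "lp_eval (of_nat n) z = of_nat n"
  by (simp add: fls_of_nat lp_eval_const)

lemma lp_eval_fls_X: "lp_eval fls_X z = z"
  by (subst lp_eval_eq_sum[of "{1}"]) auto

lemma lp_inv_nth:
  assumes "laurent_poly p"
  shows "lp_inv p $$ k = p $$ (- k)"
proof -
  have "lp_inv p $$ k = (\<Sum>n\<in>fls_support p. if n = - k then p $$ n else 0)"
    unfolding lp_inv_def by (simp only: fls_nth_sum fls_monomial_nth) (rule sum.cong, auto)
  also have "\<dots> = p $$ (- k)"
    using assms unfolding laurent_poly_def by (auto simp: sum.delta)
  finally show ?thesis .
qed

lemma laurent_poly_lp_inv: "laurent_poly p \<Longrightarrow> laurent_poly (lp_inv p)"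
  unfolding lp_inv_def by (intro laurent_poly_sum laurent_poly_monomial)

lemma lp_inv_lp_inv: "laurent_poly p \<Longrightarrow> lp_inv (lp_inv p) = p"
  by (rule fls_eqI) (simp add: lp_inv_nth laurent_poly_lp_inv)

lemma lp_inv_add: "laurent_poly p \<Longrightarrow> laurent_poly q \<Longrightarrow> lp_inv (p + q) = lp_inv p + lp_inv q"
  by (rule fls_eqI) (simp add: lp_inv_nth laurent_poly_add)

lemma lp_inv_diff: "laurent_poly p \<Longrightarrow> laurent_poly q \<Longrightarrow> lp_inv (p - q) = lp_inv p - lp_inv q"
  by (rule fls_eqI) (simp add: lp_inv_nth laurent_poly_diff)

lemma lp_inv_monomial: "lp_inv (fls_const c * fls_X_intpow n) = fls_const c * fls_X_intpow (- n)"
  by (rule fls_eqI) (simp only: lp_inv_nth[OF laurent_poly_monomial] fls_monomial_nth, auto)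

lemma lp_inv_zero: "lp_inv 0 = 0"
  by (rule fls_eqI) (simp add: lp_inv_nth laurent_poly_zero)

lemma lp_inv_sum:
  "(\<And>i. i \<in> A \<Longrightarrow> laurent_poly (f i)) \<Longrightarrow> lp_inv (\<Sum>i\<in>A. f i) = (\<Sum>i\<in>A. lp_inv (f i))"
  by (induction A rule: infinite_finite_induct) (auto simp: lp_inv_zero lp_inv_add laurent_poly_sum)

lemma lp_inv_mult:
  assumes "laurent_poly p" "laurent_poly q"
  shows "lp_inv (p * q) = lp_inv p * lp_inv q"
proof -
  have "lp_inv (p * q) = (\<Sum>n\<in>fls_support p. \<Sum>m\<in>fls_support q.
          (fls_const (p $$ n) * fls_X_intpow (- n)) * (fls_const (q $$ m) * fls_X_intpow (- m)))"
    by (simp only: fls_mult_monomial_expansion[OF assms] lp_inv_sum laurent_poly_sum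
                   laurent_poly_monomial lp_inv_monomial fls_monomial_mult)
       simp
  also have "\<dots> = lp_inv p * lp_inv q"
    unfolding lp_inv_def by (simp add: sum_product)
  finally show ?thesis .
qed

lemma lp_inv_const: "lp_inv (fls_const c) = fls_const c"
  using lp_inv_monomial[of c 0] by simp

lemma lp_inv_one: "lp_inv 1 = 1"
  using lp_inv_const[of 1] by simp

lemma lp_inv_fls_X: "lp_inv fls_X = fls_X_intpow (- 1)"
proof -
  have "fls_X = fls_const (1 :: complex) * fls_X_intpow 1"
    by (rule fls_eqI) (simp only: fls_monomial_nth, simp)
  then show ?thesis using lp_inv_monomial[of 1 1] by simp
qed

lemma lp_inv_power: "laurent_poly p \<Longrightarrow> lp_inv (p ^ k) = lp_inv p ^ k"
  by (induction k) (auto simp: lp_inv_one lp_inv_mult laurent_poly_power)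

lemma lp_eval_lp_inv:
  assumes "laurent_poly p"
  shows "lp_eval (lp_inv p) z = lp_eval p (inverse z)"
proof -
  let ?S = "fls_support p"
  have S: "finite (uminus ` ?S)" "finite ?S" using assms unfolding laurent_poly_def by simp_all
  have "lp_eval (lp_inv p) z = (\<Sum>n\<in>uminus ` ?S. p $$ (- n) * z powi n)"
    by (subst lp_eval_eq_sum[OF S(1)]) (auto simp: lp_inv_nth assms image_iff, metis minus_minus)
  also have "\<dots> = (\<Sum>n\<in>?S. p $$ n * inverse z powi n)"
    by (subst sum.reindex) (auto simp: inj_on_def power_int_minus power_int_inverse)
  also have "\<dots> = lp_eval p (inverse z)"
    by (rule lp_eval_eq_sum[OF S(2), symmetric]) simp
  finally show ?thesis .
qed

section \<open>Divisibility and Taylor coefficients\<close>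

definition lp_X_minus :: "complex \<Rightarrow> complex fls" where
  "lp_X_minus a = fls_X - fls_const a"

definition lp_dvd :: "complex fls \<Rightarrow> complex fls \<Rightarrow> bool" where
  "lp_dvd d p \<longleftrightarrow> (\<exists>q. laurent_poly q \<and> p = d * q)"

lemma lp_dvdI: "laurent_poly q \<Longrightarrow> p = d * q \<Longrightarrow> lp_dvd d p"
  unfolding lp_dvd_def by blast

lemma lp_dvd_add:
  assumes "lp_dvd d p" "lp_dvd d q"
  shows "lp_dvd d (p + q)"
proof -
  obtain r s where "laurent_poly r" "p = d * r" "laurent_poly s" "q = d * s"
    using assms unfolding lp_dvd_def by blast
  then show ?thesis by (intro lp_dvdI[of "r + s"]) (simp_all add: laurent_poly_add distrib_left)
qed

lemma lp_dvd_uminus: "lp_dvd d p \<Longrightarrow> lp_dvd d (- p)"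
  unfolding lp_dvd_def by (auto intro!: laurent_poly_uminus)

lemma lp_dvd_uminus_iff: "lp_dvd d (- p) \<longleftrightarrow> lp_dvd d p"
  using lp_dvd_uminus[of d p] lp_dvd_uminus[of d "- p"] by auto

lemma lp_dvd_diff: "lp_dvd d p \<Longrightarrow> lp_dvd d q \<Longrightarrow> lp_dvd d (p - q)"
  using lp_dvd_add[of d p "- q"] lp_dvd_uminus[of d q] by simp

lemma lp_dvd_mult_left:
  assumes "laurent_poly c" "lp_dvd d p"
  shows "lp_dvd d (c * p)"
proof -
  obtain r where "laurent_poly r" "p = d * r"
    using assms(2) unfolding lp_dvd_def by blast
  then show ?thesis
    using assms(1) by (intro lp_dvdI[of "c * r"]) (simp_all add: laurent_poly_mult mult.left_commute)
qed

lemma lp_dvd_sum: "(\<And>i. i \<in> A \<Longrightarrow> lp_dvd d (f i)) \<Longrightarrow> lp_dvd d (\<Sum>i\<in>A. f i)"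
  by (induction A rule: infinite_finite_induct)
     (auto intro: lp_dvd_add lp_dvdI[OF laurent_poly_zero])

lemma lp_dvd_mult_iff:
  assumes "laurent_poly e"
  shows "lp_dvd (d * e) p \<longleftrightarrow> (\<exists>q. laurent_poly q \<and> p = d * q \<and> lp_dvd e q)"
proof
  assume "lp_dvd (d * e) p"
  then obtain r where "laurent_poly r" "p = d * (e * r)"
    unfolding lp_dvd_def by (auto simp: mult.assoc)
  then show "\<exists>q. laurent_poly q \<and> p = d * q \<and> lp_dvd e q"
    using assms by (blast intro: laurent_poly_mult lp_dvdI)
qed (auto simp: lp_dvd_def mult.assoc)

lemma lp_multiples_iff: "p \<in> lp_multiples P \<longleftrightarrow> lp_dvd (poly_to_lp P) p"
  unfolding lp_multiples_def lp_dvd_def by simp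

lemma laurent_poly_lp_X_minus: "laurent_poly (lp_X_minus a)"
  unfolding lp_X_minus_def by (intro laurent_poly_diff laurent_poly_fls_X laurent_poly_const)

lemma lp_eval_lp_X_minus: "lp_eval (lp_X_minus a) z = z - a"
  unfolding lp_X_minus_def
  by (simp add: lp_eval_diff laurent_poly_fls_X laurent_poly_const lp_eval_fls_X lp_eval_const)

lemma fls_deriv_lp_X_minus [simp]: "fls_deriv (lp_X_minus a) = 1"
  unfolding lp_X_minus_def by simp

lemma poly_to_lp_X_minus: "poly_to_lp [:- a, 1:] = lp_X_minus a"
  unfolding poly_to_lp_def lp_X_minus_def by (simp add: fps_of_poly_pCons)

lemma lp_dvd_lp_X_minus_monomial_diff:
  assumes "a \<noteq> 0"
  shows "lp_dvd (lp_X_minus a) (fls_X_intpow n - fls_const (a powi n))"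
proof -
  have nonneg: "lp_dvd (lp_X_minus a) (fls_X_intpow (int k) - fls_const (a powi int k))" for k
  proof -
    have "fls_X_intpow (int k) - fls_const (a powi int k) = fls_X ^ k - fls_const a ^ k"
      by (simp add: fls_X_power_conv_shift_1 fls_const_power)
    also have "\<dots> = lp_X_minus a * (\<Sum>i<k. fls_const a ^ (k - Suc i) * fls_X ^ i)"
      unfolding lp_X_minus_def by (rule power_diff_sumr2)
    finally show ?thesis
      by (rule lp_dvdI[rotated])
         (intro laurent_poly_sum laurent_poly_mult laurent_poly_power laurent_poly_const laurent_poly_fls_X)
  qed
  show ?thesis
  proof (cases "n \<ge> 0")
    case True
    then show ?thesis using nonneg[of "nat n"] by simp
  next
    case False
    let ?x = "fls_X_intpow n :: complex fls" and ?c = "fls_const (a powi n)"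
    have x: "?x * fls_X_intpow (- n) = 1"
      using fls_X_intpow_times_fls_X_intpow[of n "- n"] by simp
    have c: "?c * fls_const (a powi (- n)) = 1"
      using assms by (simp add: power_int_minus)
    have "?x - ?c = - (?x * ?c) * (fls_X_intpow (- n) - fls_const (a powi (- n)))"
      using x c by (simp add: algebra_simps)
    moreover have "lp_dvd (lp_X_minus a) (fls_X_intpow (- n) - fls_const (a powi (- n)))"
      using nonneg[of "nat (- n)"] False by simp
    ultimately show ?thesis
      by (metis lp_dvd_mult_left laurent_poly_uminus laurent_poly_mult laurent_poly_fls_X_intpow
                laurent_poly_const)
  qed
qed

lemma lp_dvd_lp_X_minus_iff_root:
  assumes "a \<noteq> 0" "laurent_poly p"
  shows "lp_dvd (lp_X_minus a) p \<longleftrightarrow> lp_eval p a = 0"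
proof
  assume "lp_dvd (lp_X_minus a) p"
  then show "lp_eval p a = 0"
    unfolding lp_dvd_def
    using assms(1) by (auto simp: lp_eval_mult laurent_poly_lp_X_minus lp_eval_lp_X_minus)
next
  assume root: "lp_eval p a = 0"
  let ?S = "fls_support p"
  have "fls_const (lp_eval p a) = (\<Sum>n\<in>?S. fls_const (p $$ n) * fls_const (a powi n))"
    by (rule fls_eqI) (simp add: lp_eval_def fls_nth_sum)
  then have "p = (\<Sum>n\<in>?S. fls_const (p $$ n) * (fls_X_intpow n - fls_const (a powi n)))"
    using root fls_monomial_expansion[of ?S p] assms(2)
    by (simp add: laurent_poly_def right_diff_distrib sum_subtractf)
  also have "lp_dvd (lp_X_minus a) \<dots>"
    by (intro lp_dvd_sum lp_dvd_mult_left laurent_poly_const lp_dvd_lp_X_minus_monomial_diff assms(1))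
  finally show "lp_dvd (lp_X_minus a) p" .
qed

lemma funpow_fls_deriv_add: "(fls_deriv ^^ j) (f + g) = (fls_deriv ^^ j) f + (fls_deriv ^^ j) g"
  by (induction j) auto

lemma funpow_fls_deriv_diff: "(fls_deriv ^^ j) (f - g) = (fls_deriv ^^ j) f - (fls_deriv ^^ j) g"
  by (induction j) auto

lemma funpow_fls_deriv_lp_X_minus_mult:
  "(fls_deriv ^^ Suc j) (lp_X_minus a * q)
     = lp_X_minus a * (fls_deriv ^^ Suc j) q + of_nat (Suc j) * (fls_deriv ^^ j) q"
proof (induction j)
  case (Suc j)
  have "(fls_deriv ^^ Suc (Suc j)) (lp_X_minus a * q) = fls_deriv ((fls_deriv ^^ Suc j) (lp_X_minus a * q))"
    by simp
  also have "\<dots> = fls_deriv (lp_X_minus a * (fls_deriv ^^ Suc j) q + of_nat (Suc j) * (fls_deriv ^^ j) q)"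
    using Suc by simp
  also have "\<dots> = lp_X_minus a * (fls_deriv ^^ Suc (Suc j)) q + of_nat (Suc (Suc j)) * (fls_deriv ^^ Suc j) q"
    by (simp add: algebra_simps)
  finally show ?case .
qed simp

lemma taylor_coeff_0: "taylor_coeff a 0 p = lp_eval p a"
  unfolding taylor_coeff_def by simp

lemma taylor_coeff_add:
  "laurent_poly f \<Longrightarrow> laurent_poly g \<Longrightarrow> taylor_coeff a j (f + g) = taylor_coeff a j f + taylor_coeff a j g"
  unfolding taylor_coeff_def funpow_fls_deriv_add
  by (simp add: lp_eval_add laurent_poly_funpow_fls_deriv add_divide_distrib)

lemma taylor_coeff_diff:
  "laurent_poly f \<Longrightarrow> laurent_poly g \<Longrightarrow> taylor_coeff a j (f - g) = taylor_coeff a j f - taylor_coeff a j g"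
  unfolding taylor_coeff_def funpow_fls_deriv_diff
  by (simp add: lp_eval_diff laurent_poly_funpow_fls_deriv diff_divide_distrib)

lemma taylor_coeff_const: "taylor_coeff a j (fls_const c) = (if j = 0 then c else 0)"
proof (cases j)
  case (Suc i)
  have "(fls_deriv ^^ Suc i) (fls_const c) = 0" by (induction i) auto
  then show ?thesis unfolding taylor_coeff_def Suc by (simp add: lp_eval_def)
qed (simp add: taylor_coeff_0 lp_eval_const)

lemma taylor_coeff_Suc_lp_X_minus_mult:
  assumes "a \<noteq> 0" "laurent_poly q"
  shows "taylor_coeff a (Suc j) (lp_X_minus a * q) = taylor_coeff a j q"
proof -
  have "lp_eval ((fls_deriv ^^ Suc j) (lp_X_minus a * q)) a
      = of_nat (Suc j) * lp_eval ((fls_deriv ^^ j) q) a"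
    by (simp only: funpow_fls_deriv_lp_X_minus_mult lp_eval_add lp_eval_mult laurent_poly_mult
                   laurent_poly_lp_X_minus laurent_poly_of_nat laurent_poly_funpow_fls_deriv
                   lp_eval_lp_X_minus lp_eval_of_nat assms not_False_eq_True)
       simp
  moreover have "(fact (Suc j) :: complex) = of_nat (Suc j) * fact j"
    by (simp only: fact_Suc of_nat_mult)
  ultimately show ?thesis
    unfolding taylor_coeff_def by (metis mult_divide_mult_cancel_left of_nat_eq_0_iff nat.distinct(1))
qed

lemma taylor_coeffs_eq_0_iff_lp_dvd:
  assumes "a \<noteq> 0" "laurent_poly p"
  shows "(\<forall>j<L. taylor_coeff a j p = 0) \<longleftrightarrow> lp_dvd (lp_X_minus a ^ L) p"
  using assms(2)
proof (induction L arbitrary: p)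
  case 0
  then show ?case using lp_dvdI[of p p 1] by simp
next
  case (Suc L)
  note shift = taylor_coeff_Suc_lp_X_minus_mult[OF assms(1)]
  show ?case
  proof
    assume vanish: "\<forall>j<Suc L. taylor_coeff a j p = 0"
    then obtain q where q: "laurent_poly q" "p = lp_X_minus a * q"
      using lp_dvd_lp_X_minus_iff_root[OF assms(1) Suc.prems]
      unfolding lp_dvd_def by (auto simp: taylor_coeff_0)
    have "\<forall>j<L. taylor_coeff a j q = 0"
      using vanish shift[OF q(1)] unfolding q(2) by auto
    then show "lp_dvd (lp_X_minus a ^ Suc L) p"
      using Suc.IH[OF q(1)] q
      unfolding power_Suc lp_dvd_mult_iff[OF laurent_poly_power[OF laurent_poly_lp_X_minus]] by blast
  next
    assume "lp_dvd (lp_X_minus a ^ Suc L) p"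
    then obtain q where q: "laurent_poly q" "p = lp_X_minus a * q" "lp_dvd (lp_X_minus a ^ L) q"
      unfolding power_Suc lp_dvd_mult_iff[OF laurent_poly_power[OF laurent_poly_lp_X_minus]] by blast
    have "taylor_coeff a 0 p = 0"
      using lp_dvd_lp_X_minus_iff_root[OF assms(1) Suc.prems] q(2)
      by (auto simp: taylor_coeff_0 intro: lp_dvdI[OF q(1)])
    then show "\<forall>j<Suc L. taylor_coeff a j p = 0"
      using Suc.IH[OF q(1)] q(3) shift[OF q(1)] unfolding q(2) by (auto simp: less_Suc_eq_0_disj)
  qed
qed

lemma taylor_coeff_eq_if_lp_dvd_diff:
  assumes "a \<noteq> 0" "laurent_poly f" "laurent_poly g" "lp_dvd (lp_X_minus a ^ L) (f - g)" "j < L"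
  shows "taylor_coeff a j f = taylor_coeff a j g"
proof -
  have "taylor_coeff a j (f - g) = 0"
    using taylor_coeffs_eq_0_iff_lp_dvd[OF assms(1) laurent_poly_diff[OF assms(2,3)]] assms(4,5) by blast
  then show ?thesis using taylor_coeff_diff[OF assms(2,3)] by simp
qed

lemma exists_laurent_poly_taylor_coeffs:
  assumes "a \<noteq> 0"
  shows "\<exists>f. laurent_poly f \<and> (\<forall>j<L. taylor_coeff a j f = c j)"
proof (induction L arbitrary: c)
  case 0
  then show ?case using laurent_poly_zero by blast
next
  case (Suc L)
  obtain f where f: "laurent_poly f" "\<forall>j<L. taylor_coeff a j f = c (Suc j)"
    using Suc.IH[of "\<lambda>j. c (Suc j)"] by blast
  have lf: "laurent_poly (lp_X_minus a * f)"
    by (intro laurent_poly_mult laurent_poly_lp_X_minus f(1))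
  have "taylor_coeff a j (fls_const (c 0) + lp_X_minus a * f) = c j" if "j < Suc L" for j
    using that f(2) assms
    by (cases j) (auto simp: taylor_coeff_add[OF laurent_poly_const lf] taylor_coeff_const
        taylor_coeff_0 lp_eval_mult[OF laurent_poly_lp_X_minus f(1)] lp_eval_lp_X_minus
        taylor_coeff_Suc_lp_X_minus_mult[OF assms f(1)])
  then show ?case by (intro exI[of _ "fls_const (c 0) + lp_X_minus a * f"] conjI laurent_poly_add
                            laurent_poly_const lf allI impI)
qed

section \<open>The factors of \<open>U\<^sub>a\<close>\<close>

lemma lp_bezout_lp_X_minus_power:
  assumes "a \<noteq> b"
  obtains u v where "laurent_poly u" "laurent_poly v"
    "u * lp_X_minus a ^ L + v * lp_X_minus b ^ M = 1"
proof -
  have "coprime [:- a, 1:] [:- b, 1:]"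
  proof (rule coprimeI)
    fix c assume "c dvd [:- a, 1:]" "c dvd [:- b, 1:]"
    then have "c dvd [:b - a:]" using dvd_diff[of c "[:- a, 1:]" "[:- b, 1:]"] by simp
    moreover have "is_unit [:b - a:]" using assms by (simp add: is_unit_const_poly_iff dvd_field_iff)
    ultimately show "is_unit c" by (rule dvd_unit_imp_unit)
  qed
  then have "gcd ([:- a, 1:] ^ L) ([:- b, 1:] ^ M) = 1" by simp
  then obtain U V where "U * [:- a, 1:] ^ L + V * [:- b, 1:] ^ M = 1"
    using bezout_coefficients_fst_snd[of "[:- a, 1:] ^ L" "[:- b, 1:] ^ M"] by auto
  then have "poly_to_lp (U * [:- a, 1:] ^ L + V * [:- b, 1:] ^ M) = 1"
    by (simp add: poly_to_lp_one)
  then have "poly_to_lp U * lp_X_minus a ^ L + poly_to_lp V * lp_X_minus b ^ M = 1"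
    by (simp only: poly_to_lp_add poly_to_lp_mult poly_to_lp_power poly_to_lp_X_minus)
  then show ?thesis using that laurent_poly_poly_to_lp by blast
qed

lemma lp_dvd_lp_X_minus_power_mult_iff:
  assumes "a \<noteq> b"
  shows "lp_dvd (lp_X_minus a ^ L * lp_X_minus b ^ M) f
           \<longleftrightarrow> lp_dvd (lp_X_minus a ^ L) f \<and> lp_dvd (lp_X_minus b ^ M) f"
    (is "lp_dvd (?A * ?B) f \<longleftrightarrow> _")
proof
  have A: "laurent_poly ?A" and B: "laurent_poly ?B"
    by (intro laurent_poly_power laurent_poly_lp_X_minus)+
  assume "lp_dvd (?A * ?B) f"
  then obtain q where q: "laurent_poly q" "f = ?A * ?B * q"
    unfolding lp_dvd_def by blast
  then have "f = ?A * (?B * q)" "f = ?B * (?A * q)"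
    by (simp_all only: ac_simps)
  then show "lp_dvd ?A f \<and> lp_dvd ?B f"
    using A B q(1) by (blast intro: lp_dvdI laurent_poly_mult)
next
  assume "lp_dvd ?A f \<and> lp_dvd ?B f"
  then obtain s t where st: "laurent_poly s" "f = ?A * s" "laurent_poly t" "f = ?B * t"
    unfolding lp_dvd_def by blast
  obtain u v where uv: "laurent_poly u" "laurent_poly v" "u * ?A + v * ?B = 1"
    using lp_bezout_lp_X_minus_power[OF assms] by blast
  have "f = f * u * ?A + f * v * ?B"
    using uv(3) by (metis distrib_left mult.assoc mult.right_neutral)
  also have "f * u * ?A = ?A * ?B * (t * u)"
    by (subst st(4)) (simp only: ac_simps)
  also have "f * v * ?B = ?A * ?B * (s * v)"
    by (subst st(2)) (simp only: ac_simps)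
  finally have "f = ?A * ?B * (t * u + s * v)"
    by (simp only: distrib_left)
  then show "lp_dvd (?A * ?B) f"
    by (rule lp_dvdI[rotated]) (intro laurent_poly_add laurent_poly_mult st uv)
qed

lemma lp_chinese_remainder:
  assumes "a \<noteq> b" "laurent_poly g" "laurent_poly h"
  obtains p where "laurent_poly p"
    "lp_dvd (lp_X_minus a ^ L) (p - g)" "lp_dvd (lp_X_minus b ^ M) (p - h)"
proof -
  let ?A = "lp_X_minus a ^ L" and ?B = "lp_X_minus b ^ M"
  obtain u v where uv: "laurent_poly u" "laurent_poly v" "u * ?A + v * ?B = 1"
    using lp_bezout_lp_X_minus_power[OF assms(1)] by blast
  have vB: "v * ?B = 1 - u * ?A" and uA: "u * ?A = 1 - v * ?B"
    using uv(3) by (simp_all add: eq_diff_eq add.commute)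
  define p where "p = g * (v * ?B) + h * (u * ?A)"
  show ?thesis
  proof (rule that)
    show "laurent_poly p"
      unfolding p_def using assms(2,3) uv(1,2)
      by (intro laurent_poly_add laurent_poly_mult laurent_poly_power laurent_poly_lp_X_minus)
    have "p - g = ?A * (u * (h - g))"
      unfolding p_def vB by (simp add: algebra_simps)
    then show "lp_dvd ?A (p - g)"
      by (rule lp_dvdI[rotated]) (intro laurent_poly_mult laurent_poly_diff uv(1) assms(2,3))
    have "p - h = ?B * (v * (g - h))"
      unfolding p_def uA by (simp add: algebra_simps)
    then show "lp_dvd ?B (p - h)"
      by (rule lp_dvdI[rotated]) (intro laurent_poly_mult laurent_poly_diff uv(2) assms(2,3))
  qed
qed

lemma lp_inv_lp_X_minus:
  assumes "a \<noteq> 0"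
  shows "lp_inv (lp_X_minus a) = fls_const (- a) * fls_X_intpow (- 1) * lp_X_minus (inverse a)"
proof -
  have X: "fls_X_intpow (- 1) * fls_X = (1 :: complex fls)"
    by (simp add: fls_X_conv_shift_1 fls_times_both_shifted_simp)
  have c: "fls_const (- a) * fls_const (inverse a) = - 1"
    using assms by simp
  have "lp_inv (lp_X_minus a) = fls_X_intpow (- 1) - fls_const a"
    unfolding lp_X_minus_def
    by (simp add: lp_inv_diff laurent_poly_fls_X laurent_poly_const lp_inv_fls_X lp_inv_const)
  also have "\<dots> = fls_const (- a) * (fls_X_intpow (- 1) * fls_X)
                 - fls_X_intpow (- 1) * (fls_const (- a) * fls_const (inverse a))"
    unfolding X c by simp
  also have "\<dots> = fls_const (- a) * fls_X_intpow (- 1) * lp_X_minus (inverse a)"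
    unfolding lp_X_minus_def by (simp only: ring_distribs ac_simps)
  finally show ?thesis .
qed

lemma lp_dvd_lp_inv:
  assumes "a \<noteq> 0" "lp_dvd (lp_X_minus a ^ L) f"
  shows "lp_dvd (lp_X_minus (inverse a) ^ L) (lp_inv f)"
proof -
  obtain s where s: "laurent_poly s" "f = lp_X_minus a ^ L * s"
    using assms(2) unfolding lp_dvd_def by blast
  let ?w = "fls_const (- a) * fls_X_intpow (- 1)"
  have "lp_inv f = (?w * lp_X_minus (inverse a)) ^ L * lp_inv s"
    unfolding s(2) lp_inv_lp_X_minus[OF assms(1), symmetric]
    by (simp add: lp_inv_mult lp_inv_power laurent_poly_power laurent_poly_lp_X_minus s(1))
  also have "\<dots> = lp_X_minus (inverse a) ^ L * (?w ^ L * lp_inv s)"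
    by (simp only: power_mult_distrib ac_simps)
  finally show ?thesis
    by (rule lp_dvdI[rotated])
       (intro laurent_poly_mult laurent_poly_power laurent_poly_const laurent_poly_fls_X_intpow
              laurent_poly_lp_inv s(1))
qed

lemma lp_dvd_lp_inv_iff:
  assumes "a \<noteq> 0" "laurent_poly f"
  shows "lp_dvd (lp_X_minus a ^ L) (lp_inv f) \<longleftrightarrow> lp_dvd (lp_X_minus (inverse a) ^ L) f"
  using lp_dvd_lp_inv[of a L "lp_inv f"] lp_dvd_lp_inv[of "inverse a" L f] assms
  by (auto simp: lp_inv_lp_inv)

lemma inverse_eq_self_iff:
  fixes a :: "'a :: field"
  assumes "a \<noteq> 0"
  shows "inverse a = a \<longleftrightarrow> a\<^sup>2 = 1"
proof
  assume "inverse a = a"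
  then show "a\<^sup>2 = 1" using assms by (metis power2_eq_square right_inverse)
next
  assume "a\<^sup>2 = 1"
  then show "inverse a = a" by (intro inverse_unique) (simp add: power2_eq_square)
qed

lemma poly_to_lp_U_poly:
  assumes "a \<noteq> 0"
  shows "poly_to_lp (U_poly a) =
           (if a\<^sup>2 = 1 then lp_X_minus a else lp_X_minus a * lp_X_minus (inverse a))"
proof -
  have "[:- a, 1:] * [:- inverse a, 1:] = [:1, - (a + inverse a), 1:]"
    using assms by simp
  then have "poly_to_lp [:1, - (a + inverse a), 1:] = lp_X_minus a * lp_X_minus (inverse a)"
    by (metis poly_to_lp_mult poly_to_lp_X_minus)
  then show ?thesis
    unfolding U_poly_def by (simp add: poly_to_lp_X_minus)
qed

lemma lp_multiples_U_poly_power_iff: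
  assumes "a \<noteq> 0"
  shows "f \<in> lp_multiples (U_poly a ^ L)
           \<longleftrightarrow> lp_dvd (lp_X_minus a ^ L) f \<and> lp_dvd (lp_X_minus (inverse a) ^ L) f"
proof (cases "a\<^sup>2 = 1")
  case True
  then show ?thesis
    using poly_to_lp_U_poly[OF assms] inverse_eq_self_iff[OF assms]
    by (simp add: lp_multiples_iff poly_to_lp_power)
next
  case False
  then have "a \<noteq> inverse a" using inverse_eq_self_iff[OF assms] by metis
  with False show ?thesis
    using poly_to_lp_U_poly[OF assms]
    by (simp add: lp_multiples_iff poly_to_lp_power power_mult_distrib
                  lp_dvd_lp_X_minus_power_mult_iff)
qed

section \<open>Kernel and image of the truncated Taylor map\<close>

lemma s_trunc_eq_0_iff:
  assumes "a \<noteq> 0" "(p, r, q) \<in> onsager"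
  shows "s_trunc a L (p, r, q) = ((\<lambda>_. 0), (\<lambda>_. 0), (\<lambda>_. 0))
           \<longleftrightarrow> p \<in> lp_multiples (U_poly a ^ L) \<and> q \<in> lp_multiples (U_poly a ^ L)"
proof -
  have o: "laurent_poly p" "laurent_poly q" "r = lp_inv p" "lp_inv q = - q"
    using assms(2) unfolding onsager_def by auto
  note vanish_iff = taylor_coeffs_eq_0_iff_lp_dvd[OF assms(1)]
  have "s_trunc a L (p, r, q) = ((\<lambda>_. 0), (\<lambda>_. 0), (\<lambda>_. 0)) \<longleftrightarrow>
        (\<forall>j<L. taylor_coeff a j p = 0) \<and> (\<forall>j<L. taylor_coeff a j r = 0) \<and>
        (\<forall>j<L. taylor_coeff a j q = 0)"
    unfolding s_trunc_def by (auto simp: fun_eq_iff)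
  also have "\<dots> \<longleftrightarrow> lp_dvd (lp_X_minus a ^ L) p \<and> lp_dvd (lp_X_minus a ^ L) (lp_inv p) \<and>
                    lp_dvd (lp_X_minus a ^ L) q"
    using vanish_iff[OF o(1)] vanish_iff[OF laurent_poly_lp_inv[OF o(1)]] vanish_iff[OF o(2)] o(3)
    by simp
  \<comment> \<open>as \<open>q(t\<^sup>-\<^sup>1) = - q(t)\<close>, the jet of \<open>q\<close> at \<open>a\<close> also controls its jet at \<open>a\<^sup>-\<^sup>1\<close>\<close>
  also have "\<dots> \<longleftrightarrow> (lp_dvd (lp_X_minus a ^ L) p \<and> lp_dvd (lp_X_minus (inverse a) ^ L) p) \<and>
                    (lp_dvd (lp_X_minus a ^ L) q \<and> lp_dvd (lp_X_minus (inverse a) ^ L) q)"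
    using lp_dvd_lp_inv_iff[OF assms(1) o(1)] lp_dvd_lp_inv_iff[OF assms(1) o(2)] o(4)
    by (auto simp: lp_dvd_uminus_iff)
  also have "\<dots> \<longleftrightarrow> p \<in> lp_multiples (U_poly a ^ L) \<and> q \<in> lp_multiples (U_poly a ^ L)"
    by (simp add: lp_multiples_U_poly_power_iff[OF assms(1)])
  finally show ?thesis .
qed

lemma kernel_s_trunc:
  assumes "a \<noteq> 0"
  shows "{x \<in> onsager. s_trunc a L x = ((\<lambda>_. 0), (\<lambda>_. 0), (\<lambda>_. 0))} = onsager_ideal (U_poly a ^ L)"
  unfolding onsager_ideal_def using s_trunc_eq_0_iff[OF assms] by auto

lemma lp_dvd_lp_inv_diff:
  assumes "a \<noteq> 0" "laurent_poly p" "laurent_poly g"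
    "lp_dvd (lp_X_minus (inverse a) ^ L) (p - lp_inv g)"
  shows "lp_dvd (lp_X_minus a ^ L) (lp_inv p - g)"
  using lp_dvd_lp_inv_iff[of a "p - lp_inv g" L] assms
  by (simp add: lp_inv_diff laurent_poly_diff laurent_poly_lp_inv lp_inv_lp_inv)

lemma exists_lp_jets_at_a_and_inverse:
  assumes "a \<noteq> 0" "a\<^sup>2 \<noteq> 1" "laurent_poly g1" "laurent_poly g2"
  obtains p where "laurent_poly p"
    "lp_dvd (lp_X_minus a ^ L) (p - g1)" "lp_dvd (lp_X_minus a ^ L) (lp_inv p - g2)"
proof -
  have distinct: "a \<noteq> inverse a" using inverse_eq_self_iff[OF assms(1)] assms(2) by metis
  obtain p where p: "laurent_poly p" "lp_dvd (lp_X_minus a ^ L) (p - g1)"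
    "lp_dvd (lp_X_minus (inverse a) ^ L) (p - lp_inv g2)"
    using lp_chinese_remainder[OF distinct assms(3) laurent_poly_lp_inv[OF assms(4)]] by blast
  show ?thesis
    by (rule that[OF p(1,2) lp_dvd_lp_inv_diff[OF assms(1) p(1) assms(4) p(3)]])
qed

lemma exists_antisymmetric_lp_jet:
  assumes "a \<noteq> 0" "a\<^sup>2 \<noteq> 1" "laurent_poly g"
  obtains q where "laurent_poly q" "lp_inv q = - q" "lp_dvd (lp_X_minus a ^ L) (q - g)"
proof -
  obtain h where h: "laurent_poly h" "lp_dvd (lp_X_minus a ^ L) (h - g)"
    "lp_dvd (lp_X_minus a ^ L) (lp_inv h - 0)"
    using exists_lp_jets_at_a_and_inverse[OF assms(1,2,3) laurent_poly_zero] by blast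
  have "h - lp_inv h - g = (h - g) - (lp_inv h - 0)"
    by simp
  then have congruent: "lp_dvd (lp_X_minus a ^ L) (h - lp_inv h - g)"
    using lp_dvd_diff[OF h(2,3)] by (simp only:)
  have antisymmetric: "lp_inv (h - lp_inv h) = - (h - lp_inv h)"
    using h(1) by (simp add: lp_inv_diff laurent_poly_lp_inv lp_inv_lp_inv)
  show ?thesis
    by (rule that[OF laurent_poly_diff[OF h(1) laurent_poly_lp_inv[OF h(1)]] antisymmetric congruent])
qed

lemma s_trunc_image_onsager:
  assumes "a \<noteq> 0" "a\<^sup>2 \<noteq> 1"
  shows "s_trunc a L ` onsager = trunc_target L"
proof
  show "s_trunc a L ` onsager \<subseteq> trunc_target L"
    unfolding trunc_target_def s_trunc_def by auto
next
  have trunc_eq: "(\<lambda>j. if j < L then taylor_coeff a j f else 0) = c"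
    if "laurent_poly f" "laurent_poly g" "lp_dvd (lp_X_minus a ^ L) (f - g)"
       "\<forall>j<L. taylor_coeff a j g = c j" "\<forall>j\<ge>L. c j = 0" for f g c
    using taylor_coeff_eq_if_lp_dvd_diff[OF assms(1) that(1-3)] that(4,5) by (auto simp: fun_eq_iff)
  show "trunc_target L \<subseteq> s_trunc a L ` onsager"
  proof (clarsimp simp: trunc_target_def)
    fix c1 c2 c3 :: "nat \<Rightarrow> complex"
    assume c: "\<forall>j\<ge>L. c1 j = 0 \<and> c2 j = 0 \<and> c3 j = 0"
    obtain g1 g2 g3 where g: "laurent_poly g1" "laurent_poly g2" "laurent_poly g3"
      and jets: "\<forall>j<L. taylor_coeff a j g1 = c1 j" "\<forall>j<L. taylor_coeff a j g2 = c2 j"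
                "\<forall>j<L. taylor_coeff a j g3 = c3 j"
      using exists_laurent_poly_taylor_coeffs[OF assms(1), of L c1]
            exists_laurent_poly_taylor_coeffs[OF assms(1), of L c2]
            exists_laurent_poly_taylor_coeffs[OF assms(1), of L c3] by blast
    obtain p where p: "laurent_poly p" "lp_dvd (lp_X_minus a ^ L) (p - g1)"
      "lp_dvd (lp_X_minus a ^ L) (lp_inv p - g2)"
      using exists_lp_jets_at_a_and_inverse[OF assms g(1,2)] by blast
    obtain q where q: "laurent_poly q" "lp_inv q = - q" "lp_dvd (lp_X_minus a ^ L) (q - g3)"
      using exists_antisymmetric_lp_jet[OF assms g(3)] by blast
    have img: "s_trunc a L (p, lp_inv p, q) = (c1, c2, c3)"
      unfolding s_trunc_def
      using trunc_eq[OF p(1) g(1) p(2) jets(1)] trunc_eq[OF q(1) g(3) q(3) jets(3)]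
            trunc_eq[OF laurent_poly_lp_inv[OF p(1)] g(2) p(3) jets(2)] c
      by simp
    have "(p, lp_inv p, q) \<in> onsager"
      unfolding onsager_def using p(1) q by simp
    then show "(c1, c2, c3) \<in> s_trunc a L ` onsager"
      by (rule image_eqI[of _ "s_trunc a L", OF img[symmetric]])
  qed
qed

lemma s_trunc_image_onsager_ne:
  assumes "L > 0" "a\<^sup>2 = 1"
  shows "s_trunc a L ` onsager \<noteq> trunc_target L"
proof
  let ?\<delta> = "\<lambda>j. if j = 0 then 1 else 0 :: complex"
  assume surj: "s_trunc a L ` onsager = trunc_target L"
  have "((\<lambda>_. 0), (\<lambda>_. 0), ?\<delta>) \<in> trunc_target L"
    unfolding trunc_target_def using assms(1) by auto
  then obtain x where x: "((\<lambda>_. 0), (\<lambda>_. 0), ?\<delta>) = s_trunc a L x" "x \<in> onsager"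
    unfolding surj[symmetric] by (rule imageE)
  obtain p r q where "x = (p, r, q)"
    by (cases x)
  with x have pq: "(p, r, q) \<in> onsager" "s_trunc a L (p, r, q) = ((\<lambda>_. 0), (\<lambda>_. 0), ?\<delta>)"
    by simp_all
  then have q: "laurent_poly q" "lp_inv q = - q"
    unfolding onsager_def by auto
  have "(\<lambda>j. if j < L then taylor_coeff a j q else 0) = ?\<delta>"
    using pq(2) unfolding s_trunc_def by simp
  from fun_cong[OF this, of 0] have "lp_eval q a = 1"
    using assms(1) by (simp add: taylor_coeff_0)
  moreover have "a \<noteq> 0"
    using assms(2) by auto
  then have "inverse a = a"
    using assms(2) inverse_eq_self_iff by blast
  then have "lp_eval q a = - lp_eval q a"
    using lp_eval_lp_inv[OF q(1), of a] q(2) by (simp add: lp_eval_uminus)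
  ultimately show False by simp
qed

theorem proposition1:
  fixes a :: complex and L :: nat
  assumes "a \<noteq> 0" and "L > 0"
  shows "{x \<in> onsager. s_trunc a L x = ((\<lambda>_. 0), (\<lambda>_. 0), (\<lambda>_. 0))} = onsager_ideal (U_poly a ^ L)
         \<and> (s_trunc a L ` onsager = trunc_target L \<longleftrightarrow> a \<noteq> 1 \<and> a \<noteq> -1)"
  using kernel_s_trunc[OF assms(1)] s_trunc_image_onsager[OF assms(1)]
        s_trunc_image_onsager_ne[OF assms(2)] power2_eq_1_iff[of a]
  by blast

end
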